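(* Let $S$ be a commutative ring. (1) Given $t,\delta\in S$, every $n\in V[1,t,\delta]$ has the form $n=-\det[X,Y]$ for some $X,Y\in\mathbb{M}_2(S)$ with $\operatorname{tr}(X)=t$ and $\det(X)=\delta$. (2) Let $X=\begin{pmatrix}a&b\\c&d\end{pmatrix}\in\mathbb{M}_2(S)$, $t=\operatorname{tr}(X)$, $\delta=\det(X)$, $\Delta=t^2-4\delta$. Then for every $Y\in\mathbb{M}_2(S)$: $-c^2\det[X,Y]\in V[1,t,\delta]$ and $-4c^2\det[X,Y]\in V[1,-\Delta]$. (3) With notation as in (2), if moreover $\operatorname{tr}(X)$ and $\operatorname{tr}(Y)$ both lie in $2S$, then $-c^2\det[X,Y]\in V[1,-\Delta]$.
   Context: $[X,Y]=XY-YX$. For $s,t,\delta\in S$, $V[s,t,\delta]=\{s r_1^2+t r_1r_2+\delta r_2^2 : r_1,r_2\in S\}$, and $V[s,\delta]:=V[s,0,\delta]$. *)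

theory Defs
  imports "HOL-Analysis.Analysis"
begin

definition commutator :: "'a::comm_ring_1^'n^'n \<Rightarrow> 'a^'n^'n \<Rightarrow> 'a^'n^'n" where
  "commutator X Y = X ** Y - Y ** X"

definition V3 :: "'a::comm_ring_1 \<Rightarrow> 'a \<Rightarrow> 'a \<Rightarrow> 'a set" where
  "V3 s t \<delta> = {s * r1^2 + t * r1 * r2 + \<delta> * r2^2 | r1 r2. True}"

definition V2 :: "'a::comm_ring_1 \<Rightarrow> 'a \<Rightarrow> 'a set" where
  "V2 s \<delta> = V3 s 0 \<delta>"

end

theory Submission
  imports Defs
begin

(* For 2x2 matrices X = (a b; c d), Y = (e f; g h) over a commutative ring,
   -det[X,Y] is the explicit polynomial  (b g - c f)^2 + (f(a-d) - b(e-h)) u,  where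
   u = c(e-h) - g(a-d).  Multiplying by c^2 and regrouping gives the key identity
     -c^2 det[X,Y] = r^2 + tr(X) r u + det(X) u^2,   r = c(cf - gb) - d u,
   so -c^2 det[X,Y] is a value of the form V[1,tr X,det X] (part 2, first claim).
   Two facts about a binary form r^2 + t r u + delta u^2 then finish parts 2 and 3:
   four times it is (2r + t u)^2 - Delta u^2 (completing the square), and if t and u
   are both even it is itself of the shape x^2 - Delta y^2.  Evenness of u follows
   from evenness of both traces, since a - d = tr X - 2d and e - h = tr Y - 2h.
   Part 1 is a direct construction: the companion matrix of x^2 - t x + delta
   together with a suitable upper triangular Y realises every value of V[1,t,delta]. *)

lemma V3_memI: "s * r1^2 + t * r1 * r2 + \<delta> * r2^2 \<in> V3 s t \<delta>"
  unfolding V3_def by blast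

lemma V2_memI: "s * r1^2 + \<delta> * r2^2 \<in> V2 s \<delta>"
  using V3_memI[of s r1 0 r2 \<delta>] by (simp add: V2_def)

lemma trace_2: "trace (A :: 'a::comm_ring_1^2^2) = A$1$1 + A$2$2"
  by (simp add: trace_def sum_2)

lemma four_times_binary_form:
  fixes t \<delta> r u :: "'a::comm_ring_1"
  shows "4 * (r^2 + t * r * u + \<delta> * u^2) = (2 * r + t * u)^2 + (- (t^2 - 4 * \<delta>)) * u^2"
  by (simp add: algebra_simps power2_eq_square)

lemma binary_form_even:
  fixes s v \<delta> r :: "'a::comm_ring_1"
  shows "r^2 + (2 * s) * r * (2 * v) + \<delta> * (2 * v)^2 =
         (r + 2 * s * v)^2 + (- ((2 * s)^2 - 4 * \<delta>)) * v^2"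
  by (simp add: algebra_simps power2_eq_square)

lemma neg_det_commutator_2:
  fixes X Y :: "'a::comm_ring_1^2^2"
  shows "- det (commutator X Y) =
    (X$1$2 * Y$2$1 - X$2$1 * Y$1$2)^2 +
    (Y$1$2 * (X$1$1 - X$2$2) - X$1$2 * (Y$1$1 - Y$2$2)) *
    (X$2$1 * (Y$1$1 - Y$2$2) - Y$2$1 * (X$1$1 - X$2$2))"
  unfolding commutator_def det_2
  by (simp add: matrix_matrix_mult_def sum_2 algebra_simps power2_eq_square)

lemma commutator_binary_form:
  fixes X Y :: "'a::comm_ring_1^2^2"
  defines "u \<equiv> X$2$1 * (Y$1$1 - Y$2$2) - Y$2$1 * (X$1$1 - X$2$2)"
  obtains r where "- ((X$2$1)^2) * det (commutator X Y) = r^2 + trace X * r * u + det X * u^2"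
proof
  let ?r = "X$2$1 * (X$2$1 * Y$1$2 - Y$2$1 * X$1$2) - X$2$2 * u"
  have "- ((X$2$1)^2) * det (commutator X Y) = (X$2$1)^2 * (- det (commutator X Y))"
    by simp
  also have "\<dots> = ?r^2 + trace X * ?r * u + det X * u^2"
    unfolding neg_det_commutator_2 trace_2 det_2[of X] u_def
    by (simp add: algebra_simps power2_eq_square)
  finally show "- ((X$2$1)^2) * det (commutator X Y) = ?r^2 + trace X * ?r * u + det X * u^2" .
qed

lemma commutator_u_even:
  fixes X Y :: "'a::comm_ring_1^2^2"
  assumes "trace X = 2 * s" and "trace Y = 2 * v"
  shows "X$2$1 * (Y$1$1 - Y$2$2) - Y$2$1 * (X$1$1 - X$2$2) =
         2 * (X$2$1 * (v - Y$2$2) - Y$2$1 * (s - X$2$2))"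
proof -
  have a: "X$1$1 = 2 * s - X$2$2" and e: "Y$1$1 = 2 * v - Y$2$2"
    using assms unfolding trace_2 by (simp_all add: algebra_simps)
  show ?thesis unfolding a e by (simp add: algebra_simps)
qed

lemma binary_form_as_commutator:
  fixes t \<delta> r1 r2 :: "'a::comm_ring_1"
  obtains X Y :: "'a^2^2"
  where "trace X = t" "det X = \<delta>" "r1^2 + t * r1 * r2 + \<delta> * r2^2 = - det (commutator X Y)"
proof
  define X :: "'a^2^2" where
    "X = (\<chi> i j. if i = 1 then (if j = 1 then 0 else - \<delta>) else (if j = 1 then 1 else t))"
  define Y :: "'a^2^2" where
    "Y = (\<chi> i j. if i = 1 then (if j = 1 then r2 else r1 + t * r2) else 0)"
  show "trace X = t" unfolding trace_2 X_def by simp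
  show "det X = \<delta>" unfolding det_2 X_def by simp
  show "r1^2 + t * r1 * r2 + \<delta> * r2^2 = - det (commutator X Y)"
    unfolding neg_det_commutator_2 X_def Y_def by (simp add: algebra_simps power2_eq_square)
qed

theorem theorem5p10:
  fixes dummy :: "'a::comm_ring_1"
  shows
   "(\<forall>(t::'a) \<delta> n. n \<in> V3 1 t \<delta> \<longrightarrow>
       (\<exists>X Y :: 'a^2^2. trace X = t \<and> det X = \<delta> \<and> n = - det (commutator X Y)))
    \<and> (\<forall>X Y :: 'a^2^2.
         - ((X$2$1)^2) * det (commutator X Y) \<in> V3 1 (trace X) (det X) \<and>
         - (4 * (X$2$1)^2) * det (commutator X Y) \<in> V2 1 (- ((trace X)^2 - 4 * det X)))
    \<and> (\<forall>X Y :: 'a^2^2.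
         trace X \<in> {2 * s | s. True} \<and> trace Y \<in> {2 * s | s. True} \<longrightarrow>
         - ((X$2$1)^2) * det (commutator X Y) \<in> V2 1 (- ((trace X)^2 - 4 * det X)))"
proof (intro conjI allI impI)
  fix t \<delta> n :: 'a
  assume "n \<in> V3 1 t \<delta>"
  then obtain r1 r2 where "n = r1^2 + t * r1 * r2 + \<delta> * r2^2" unfolding V3_def by auto
  then show "\<exists>X Y :: 'a^2^2. trace X = t \<and> det X = \<delta> \<and> n = - det (commutator X Y)"
    by (metis binary_form_as_commutator)
next
  fix X Y :: "'a^2^2"
  obtain r u where key: "- ((X$2$1)^2) * det (commutator X Y) = r^2 + trace X * r * u + det X * u^2"
    using commutator_binary_form by blast
  show "- ((X$2$1)^2) * det (commutator X Y) \<in> V3 1 (trace X) (det X)"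
    using V3_memI[of 1 r "trace X" u "det X"] key by simp
  have "- (4 * (X$2$1)^2) * det (commutator X Y) = 4 * (r^2 + trace X * r * u + det X * u^2)"
    by (simp flip: key)
  also have "\<dots> = 1 * (2 * r + trace X * u)^2 + (- ((trace X)^2 - 4 * det X)) * u^2"
    using four_times_binary_form[where t = "trace X" and \<delta> = "det X"] by simp
  finally show "- (4 * (X$2$1)^2) * det (commutator X Y) \<in> V2 1 (- ((trace X)^2 - 4 * det X))"
    using V2_memI by metis
next
  fix X Y :: "'a^2^2"
  assume "trace X \<in> {2 * s | s. True} \<and> trace Y \<in> {2 * s | s. True}"
  then obtain s v where s: "trace X = 2 * s" and v: "trace Y = 2 * v" by blast
  obtain r where "- ((X$2$1)^2) * det (commutator X Y) =
      r^2 + trace X * r * (2 * (X$2$1 * (v - Y$2$2) - Y$2$1 * (s - X$2$2))) +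
      det X * (2 * (X$2$1 * (v - Y$2$2) - Y$2$1 * (s - X$2$2)))^2"
    using commutator_binary_form[of X Y] commutator_u_even[OF s v] by metis
  then show "- ((X$2$1)^2) * det (commutator X Y) \<in> V2 1 (- ((trace X)^2 - 4 * det X))"
    using V2_memI[of 1] unfolding s binary_form_even by simp
qed

end
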